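(* Let $p\ge1$ and let $u,v\in E_1$ with $v$ a vertex of $\Gamma^p_u$. Then the sequences $\mathcal L^u$ and $\mathcal L^v$ are compatible.
   Context: $X=\{0,\dots,p\}$; $\mathcal G_{S_p}$ is generated by $e_1,\dots,e_p$ acting on $X^\infty$ by $e_i(0w)=i\,e_i(w)$, $e_i(iw)=0w$, $e_i(jw)=jw$ for $j\notin\{0,i\}$; $\Gamma^p_u$ is the Schreier graph on the orbit of $u$ (edges $x$—$e_i(x)$). $E_1$ is the set of $w\in X^\infty$ with $\Gamma^p_w$ one-ended; every $w\in E_1$ has an infinite decomposition $w=0^ka_1u_1a_2u_2\cdots$ with $k\ge0$, $a_j\in\{1,\dots,p\}$, $a_{j+1}\ne a_j$, $u_j\in\{0,a_j\}^\ast$ finite. With $N_j=k+j+\sum_{\ell\le j}|u_\ell|$, the path of cycles of $w$ consists of the $e_{a_j}$-cycles $P^w_j$ with vertex sets $\{0,a_j\}^{N_j}a_{j+1}u_{j+1}a_{j+2}u_{j+2}\cdots$, and $\mathcal L^w=(2^{N_j})_{j\ge1}$ is the sequence of their lengths. Two integer sequences $(x_i)_{i\in\mathbb N},(y_i)_{i\in\mathbb N}$ are compatible if there exist $l,h\in\mathbb N$ with $x_{l+n}=y_{h+n}$ for all $n\in\mathbb N$. *)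

theory Defs
  imports Main
begin

text \<open>Infinite words over X = {0,...,p} are functions nat => nat with values at most p.
  Prepending a letter c to a word w is case_nat c w.\<close>

definition words :: "nat \<Rightarrow> (nat \<Rightarrow> nat) set" where
  "words p = {w. \<forall>n. w n \<le> p}"

text \<open>The generator e_i: the unique solution of e_i(0w) = i e_i(w), e_i(iw) = 0w,
  e_i(jw) = jw (j not in {0,i}); explicitly, the maximal prefix of zeros is turned into i's,
  and the first non-zero letter (if any) is swapped with 0 if it equals i.\<close>

definition gen :: "nat \<Rightarrow> (nat \<Rightarrow> nat) \<Rightarrow> (nat \<Rightarrow> nat)" where
  "gen i w = (\<lambda>n. if (\<forall>m<n. w m = 0)
                   then (if w n = 0 then i else if w n = i then 0 else w n)
                   else w n)"

lemma gen_zero: "(gen i (case_nat 0 w) ) = case_nat i (gen i w)" (is "?l = ?r")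
  proof (rule ext)
  fix n show "?l n = ?r n" by (cases n) (auto simp: gen_def All_less_Suc2)
qed

lemma gen_self: assumes "i \<noteq> 0" shows "gen i (case_nat i w) = case_nat 0 w" (is "?l = ?r")
  proof (rule ext)
  fix n show "?l n = ?r n" using assms by (cases n) (auto simp: gen_def All_less_Suc2)
qed

lemma gen_other: assumes "j \<noteq> 0" "j \<noteq> i" shows "gen i (case_nat j w) = case_nat j w" (is "?l = ?r")
  proof (rule ext)
  fix n show "?l n = ?r n" using assms by (cases n) (auto simp: gen_def All_less_Suc2)
qed

definition schreier_adj :: "nat \<Rightarrow> (nat \<Rightarrow> nat) \<Rightarrow> (nat \<Rightarrow> nat) \<Rightarrow> bool" where
  "schreier_adj p x y \<longleftrightarrow> (\<exists>i\<in>{1..p}. y = gen i x \<or> x = gen i y)"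

text \<open>Vertex set of Gamma^p_u: the orbit of u, i.e. the connected component of u.\<close>

definition orbit :: "nat \<Rightarrow> (nat \<Rightarrow> nat) \<Rightarrow> (nat \<Rightarrow> nat) set" where
  "orbit p u = {v. (u, v) \<in> {(x, y). schreier_adj p x y}\<^sup>*}"

definition comp :: "'a set \<Rightarrow> ('a \<Rightarrow> 'a \<Rightarrow> bool) \<Rightarrow> 'a set \<Rightarrow> 'a \<Rightarrow> 'a set" where
  "comp V adj F x = {y \<in> V - F. (x, y) \<in> {(a, b). a \<in> V - F \<and> b \<in> V - F \<and> adj a b}\<^sup>*}"

text \<open>One-ended: the supremum over finite vertex sets F of the number of infinite
  components of the graph minus F equals 1.\<close>

definition one_ended :: "'a set \<Rightarrow> ('a \<Rightarrow> 'a \<Rightarrow> bool) \<Rightarrow> bool" where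
  "one_ended V adj \<longleftrightarrow>
     (\<exists>F. finite F \<and> F \<subseteq> V \<and> (\<exists>x\<in>V - F. infinite (comp V adj F x))) \<and>
     (\<forall>F. finite F \<and> F \<subseteq> V \<longrightarrow>
        (\<forall>x\<in>V - F. \<forall>y\<in>V - F. infinite (comp V adj F x) \<and> infinite (comp V adj F y)
            \<longrightarrow> comp V adj F x = comp V adj F y))"

definition E1 :: "nat \<Rightarrow> (nat \<Rightarrow> nat) set" where
  "E1 p = {w \<in> words p. one_ended (orbit p w) (schreier_adj p)}"

text \<open>Decomposition w = 0^k a_1 u_1 a_2 u_2 ...; indices j >= 1.
  Ncount k us j = k + j + sum_{l=1..j} |u_l| = N_j; N_0 = k is the position of a_1,
  and in general a_j sits at position N_{j-1}.\<close>

definition Ncount :: "nat \<Rightarrow> (nat \<Rightarrow> nat list) \<Rightarrow> nat \<Rightarrow> nat" where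
  "Ncount k us j = k + j + (\<Sum>l=1..j. length (us l))"

definition decomp :: "nat \<Rightarrow> (nat \<Rightarrow> nat) \<Rightarrow> nat \<Rightarrow> (nat \<Rightarrow> nat) \<Rightarrow> (nat \<Rightarrow> nat list) \<Rightarrow> bool" where
  "decomp p w k a us \<longleftrightarrow>
     (\<forall>n<k. w n = 0) \<and>
     (\<forall>j\<ge>1. a j \<in> {1..p} \<and> a (Suc j) \<noteq> a j \<and> set (us j) \<subseteq> {0, a j} \<and>
        w (Ncount k us (j - 1)) = a j \<and>
        (\<forall>i<length (us j). w (Ncount k us (j - 1) + 1 + i) = us j ! i))"

text \<open>L^w = (2^{N_j})_{j>=1}; stored 0-based: Lseq p w n = 2^{N_{n+1}}.\<close>

definition Lseq :: "nat \<Rightarrow> (nat \<Rightarrow> nat) \<Rightarrow> nat \<Rightarrow> nat" where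
  "Lseq p w = (let (k, a, us) = (SOME (k, a, us). decomp p w k a us)
               in (\<lambda>n. 2 ^ Ncount k us (Suc n)))"

definition compatible :: "(nat \<Rightarrow> nat) \<Rightarrow> (nat \<Rightarrow> nat) \<Rightarrow> bool" where
  "compatible x y \<longleftrightarrow> (\<exists>l h. \<forall>n. x (l + n) = y (h + n))"

end

theory Submission
  imports Defs "HOL-Library.Infinite_Set"
begin

text \<open>In a decomposition w = 0^k a_1 u_1 a_2 u_2 ... the letters a_j sit exactly at the
  positions where w carries a non-zero letter different from the last non-zero letter before
  it, the switches of w. So N_0 < N_1 < ... is the increasing enumeration of the switches, a
  decomposition exists iff there are infinitely many of them, and L^w depends on the switches
  alone. A generator rewrites w only up to its first non-zero letter, so the switch sets of
  words in one orbit agree from some position on, and the enumerations of two infinite sets of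
  naturals that eventually agree are shifts of each other. One-endedness enters only through
  u, v being words: a decomposition of one word of the orbit forces one for all of them.\<close>

lemma enumerate_range_strict_mono:
  fixes f :: "nat \<Rightarrow> nat"
  assumes "strict_mono f"
  shows "enumerate (range f) n = f n"
proof -
  have Least_range: "(LEAST x. x \<in> range g) = g 0" if "strict_mono g" for g :: "nat \<Rightarrow> nat"
    using that by (auto simp: strict_mono_less_eq intro!: Least_equality)
  show ?thesis
    using assms
  proof (induction n arbitrary: f)
    case 0
    then show ?case by (simp add: enumerate_0 Least_range)
  next
    case (Suc n)
    have "range f - {f 0} = range (\<lambda>m. f (Suc m))"
      using strict_mono_eq[OF Suc.prems] by (auto simp: image_iff) (metis not0_implies_Suc)
    moreover have "strict_mono (\<lambda>m. f (Suc m))"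
      using Suc.prems by (simp add: strict_mono_def)
    ultimately show ?case
      using Suc.IH[of "\<lambda>m. f (Suc m)"] by (simp add: enumerate_Suc Least_range Suc.prems)
  qed
qed

lemma strict_mono_interval:
  fixes f :: "nat \<Rightarrow> nat"
  assumes "strict_mono f" "f 0 \<le> n"
  obtains j where "f j \<le> n" "n < f (Suc j)"
proof -
  define j' where "j' = (LEAST j. n < f j)"
  have "n < f (Suc n)"
    using strict_mono_imp_increasing[OF assms(1), of "Suc n"] by simp
  then have "n < f j'" unfolding j'_def by (rule LeastI)
  moreover have "j' \<noteq> 0"
  proof
    assume "j' = 0"
    then show False using assms(2) calculation by simp
  qed
  then obtain j where "j' = Suc j" using not0_implies_Suc by blast
  moreover have "f j \<le> n"
    using not_less_Least[of j "\<lambda>j. n < f j"] calculation by (simp add: j'_def)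
  ultimately show ?thesis using that by simp
qed

lemma finite_iff_if_eventually_eq:
  fixes S T :: "nat set"
  assumes "\<forall>\<^sub>F n in sequentially. n \<in> S \<longleftrightarrow> n \<in> T"
  shows "finite S \<longleftrightarrow> finite T"
proof -
  obtain B where "\<forall>n\<ge>B. n \<in> S \<longleftrightarrow> n \<in> T" using assms by (auto simp: eventually_sequentially)
  then have "S \<union> {..<B} = T \<union> {..<B}" by auto (meson leI)+
  then show ?thesis by (metis finite_Un finite_lessThan)
qed

lemma enumerate_tail:
  fixes S :: "nat set"
  assumes S: "infinite S"
  obtains l where "\<And>n. enumerate S (l + n) = enumerate {s \<in> S. B \<le> s} n"
proof -
  define l where "l = (LEAST i. B \<le> enumerate S i)"
  have l: "B \<le> enumerate S l"
    unfolding l_def by (rule LeastI[of _ B]) (rule le_enumerate[OF S])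
  have "range (\<lambda>n. enumerate S (l + n)) = {s \<in> S. B \<le> s}"
  proof (intro set_eqI iffI)
    fix s assume "s \<in> range (\<lambda>n. enumerate S (l + n))"
    then show "s \<in> {s \<in> S. B \<le> s}"
      using enumerate_in_set[OF S] l S by (auto intro: order_trans)
  next
    fix s assume s: "s \<in> {s \<in> S. B \<le> s}"
    then obtain i where i: "s = enumerate S i" using enumerate_Ex[OF S] by force
    then have "l \<le> i" unfolding l_def using s by (intro Least_le) simp
    then show "s \<in> range (\<lambda>n. enumerate S (l + n))" using i by (metis le_add_diff_inverse rangeI)
  qed
  moreover have "strict_mono (\<lambda>n. enumerate S (l + n))"
    using S by (simp add: strict_mono_def)
  ultimately have "enumerate S (l + n) = enumerate {s \<in> S. B \<le> s} n" for n
    using enumerate_range_strict_mono by metis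
  then show ?thesis by (rule that)
qed

lemma enumerate_shift_if_eventually_eq:
  fixes S T :: "nat set"
  assumes "infinite S" "infinite T" "\<forall>\<^sub>F n in sequentially. n \<in> S \<longleftrightarrow> n \<in> T"
  obtains l h where "\<And>n. enumerate S (l + n) = enumerate T (h + n)"
proof -
  obtain B where "\<forall>n\<ge>B. n \<in> S \<longleftrightarrow> n \<in> T" using assms(3) by (auto simp: eventually_sequentially)
  then have "{s \<in> S. B \<le> s} = {s \<in> T. B \<le> s}" by auto
  moreover obtain l where "\<And>n. enumerate S (l + n) = enumerate {s \<in> S. B \<le> s} n"
    using enumerate_tail[OF assms(1), of B] by blast
  moreover obtain h where "\<And>n. enumerate T (h + n) = enumerate {s \<in> T. B \<le> s} n"
    using enumerate_tail[OF assms(2), of B] by blast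
  ultimately have "enumerate S (l + n) = enumerate T (h + n)" for n by simp
  then show ?thesis by (rule that)
qed

primrec last_nonzero :: "(nat \<Rightarrow> nat) \<Rightarrow> nat \<Rightarrow> nat" where
  "last_nonzero w 0 = 0"
| "last_nonzero w (Suc n) = (if w n \<noteq> 0 then w n else last_nonzero w n)"

definition switches :: "(nat \<Rightarrow> nat) \<Rightarrow> nat set" where
  "switches w = {n. w n \<noteq> 0 \<and> w n \<noteq> last_nonzero w n}"

lemma last_nonzero_eq_0: "(\<And>m. m < n \<Longrightarrow> w m = 0) \<Longrightarrow> last_nonzero w n = 0"
  by (induction n) auto

lemma Least_nonzero_in_switches:
  assumes "w n \<noteq> 0"
  shows "(LEAST m. w m \<noteq> 0) \<in> switches w"
proof -
  have "w (LEAST m. w m \<noteq> 0) \<noteq> 0" using assms by (rule LeastI)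
  moreover have "last_nonzero w (LEAST m. w m \<noteq> 0) = 0"
    using not_less_Least by (blast intro: last_nonzero_eq_0)
  ultimately show ?thesis by (simp add: switches_def)
qed

lemma last_nonzero_block:
  assumes "w s \<noteq> 0" "s < t" "\<And>i. s \<le> i \<Longrightarrow> i < t \<Longrightarrow> w i \<in> {0, w s}"
  shows "last_nonzero w t = w s"
  using assms(2,3)
proof (induction t)
  case (Suc t)
  show ?case
  proof (cases "s = t")
    case False
    then have "last_nonzero w t = w s" using Suc by simp
    moreover have "w t \<in> {0, w s}" using Suc.prems by simp
    ultimately show ?thesis by auto
  qed (use assms(1) in simp)
qed simp

lemma not_in_switches_inside_block:
  assumes "w s \<noteq> 0" "s < i" "i < t" "\<And>j. s \<le> j \<Longrightarrow> j < t \<Longrightarrow> w j \<in> {0, w s}"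
  shows "i \<notin> switches w"
proof -
  have "last_nonzero w i = w s"
    using assms by (intro last_nonzero_block) auto
  moreover have "w i \<in> {0, w s}" using assms by simp
  ultimately show ?thesis by (auto simp: switches_def)
qed

lemma block_if_no_switches:
  assumes "w s \<noteq> 0" "s \<le> i" "i < t" "\<And>j. s < j \<Longrightarrow> j < t \<Longrightarrow> j \<notin> switches w"
  shows "w i \<in> {0, w s}"
  using assms(2,3)
proof (induction i rule: less_induct)
  case (less i)
  show ?case
  proof (cases "s = i")
    case False
    then have "last_nonzero w i = w s"
      using less assms(1) by (intro last_nonzero_block) auto
    moreover have "i \<notin> switches w" using False less.prems assms(4) by simp
    ultimately show ?thesis by (auto simp: switches_def)
  qed simp
qed

lemma zero_before_switches:
  assumes S: "infinite (switches w)" and n: "n < enumerate (switches w) 0"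
  shows "w n = 0"
proof (rule ccontr)
  assume "w n \<noteq> 0"
  then have "(LEAST m. w m \<noteq> 0) \<in> switches w" by (rule Least_nonzero_in_switches)
  moreover have "(LEAST m. w m \<noteq> 0) \<le> n" using \<open>w n \<noteq> 0\<close> by (rule Least_le)
  moreover have "enumerate (switches w) 0 \<le> s" if "s \<in> switches w" for s
    using that by (simp add: enumerate_0 Least_le)
  ultimately show False using n by fastforce
qed

lemma block_between_switches:
  assumes S: "infinite (switches w)"
    and i: "enumerate (switches w) j \<le> i" "i < enumerate (switches w) (Suc j)"
  shows "w i \<in> {0, w (enumerate (switches w) j)}"
proof (rule block_if_no_switches[OF _ i])
  show "w (enumerate (switches w) j) \<noteq> 0"
    using enumerate_in_set[OF S] by (simp add: switches_def)
  fix t assume t: "enumerate (switches w) j < t" "t < enumerate (switches w) (Suc j)"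
  show "t \<notin> switches w"
  proof
    assume "t \<in> switches w"
    then obtain l where "t = enumerate (switches w) l" using range_enumerate[OF S] by blast
    then show False using t S by simp
  qed
qed

lemma Ncount_0 [simp]: "Ncount k us 0 = k"
  by (simp add: Ncount_def)

lemma Ncount_Suc: "Ncount k us (Suc j) = Ncount k us j + 1 + length (us (Suc j))"
  by (simp add: Ncount_def)

lemma strict_mono_Ncount: "strict_mono (Ncount k us)"
  by (rule strict_mono_Suc_iff[THEN iffD2]) (simp add: Ncount_Suc)

lemma decomp_prefix_zero: "decomp p w k a us \<Longrightarrow> n < k \<Longrightarrow> w n = 0"
  unfolding decomp_def by blast

lemma decompD:
  assumes "decomp p w k a us"
  shows "a (Suc j) \<in> {1..p}" and "a (Suc (Suc j)) \<noteq> a (Suc j)"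
    and "set (us (Suc j)) \<subseteq> {0, a (Suc j)}" and "w (Ncount k us j) = a (Suc j)"
    and "i < length (us (Suc j)) \<Longrightarrow> w (Ncount k us j + 1 + i) = us (Suc j) ! i"
  using assms[unfolded decomp_def, THEN conjunct2, rule_format, of "Suc j"] by auto

lemma decompI:
  assumes "\<And>n. n < k \<Longrightarrow> w n = 0"
    and "\<And>j. a (Suc j) \<in> {1..p}" and "\<And>j. a (Suc (Suc j)) \<noteq> a (Suc j)"
    and "\<And>j. set (us (Suc j)) \<subseteq> {0, a (Suc j)}" and "\<And>j. w (Ncount k us j) = a (Suc j)"
    and "\<And>i j. i < length (us (Suc j)) \<Longrightarrow> w (Ncount k us j + 1 + i) = us (Suc j) ! i"
  shows "decomp p w k a us"
  unfolding decomp_def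
proof (intro conjI allI impI)
  fix j :: nat assume "1 \<le> j"
  then obtain j' where j: "j = Suc j'" by (metis One_nat_def Suc_le_D)
  show "a j \<in> {1..p}" "a (Suc j) \<noteq> a j" "set (us j) \<subseteq> {0, a j}" "w (Ncount k us (j - 1)) = a j"
    using assms(2-5)[of j'] j by simp_all
  show "w (Ncount k us (j - 1) + 1 + i) = us j ! i" if "i < length (us j)" for i
    using assms(6)[of i j'] that j by simp
qed (rule assms(1))

lemma decomp_nonzero:
  assumes "decomp p w k a us"
  shows "w (Ncount k us j) \<noteq> 0"
  using decompD(1,4)[OF assms, of j] by simp

lemma decomp_block:
  assumes D: "decomp p w k a us" and i: "Ncount k us j \<le> i" "i < Ncount k us (Suc j)"
  shows "w i \<in> {0, w (Ncount k us j)}"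
proof (cases "i = Ncount k us j")
  case False
  define l where "l = i - Ncount k us j - 1"
  have l: "i = Ncount k us j + 1 + l" "l < length (us (Suc j))"
    using i False unfolding l_def Ncount_Suc by linarith+
  have "w i = us (Suc j) ! l" unfolding l(1) by (rule decompD(5)[OF D l(2)])
  moreover have "us (Suc j) ! l \<in> {0, a (Suc j)}"
    using decompD(3)[OF D] l(2) nth_mem by blast
  ultimately show ?thesis using decompD(4)[OF D] by simp
qed simp

lemma switches_eq_range_Ncount:
  assumes D: "decomp p w k a us"
  shows "switches w = range (Ncount k us)"
proof (intro set_eqI iffI)
  fix n assume n: "n \<in> switches w"
  then have "w n \<noteq> 0" by (simp add: switches_def)
  then have "\<not> n < k" using decomp_prefix_zero[OF D, of n] by auto
  then have "Ncount k us 0 \<le> n" by simp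
  then obtain j where j: "Ncount k us j \<le> n" "n < Ncount k us (Suc j)"
    by (rule strict_mono_interval[OF strict_mono_Ncount])
  have "\<not> Ncount k us j < n"
    using not_in_switches_inside_block[of w "Ncount k us j",
        OF decomp_nonzero[OF D] _ j(2) decomp_block[OF D]] n
    by blast
  then have "n = Ncount k us j" using j(1) by simp
  then show "n \<in> range (Ncount k us)" by blast
next
  fix n assume "n \<in> range (Ncount k us)"
  then obtain j where n: "n = Ncount k us j" by blast
  have "last_nonzero w n \<noteq> w n"
  proof (cases j)
    case 0
    then have "last_nonzero w n = 0"
      using n decomp_prefix_zero[OF D] by (intro last_nonzero_eq_0) simp
    then show ?thesis using decomp_nonzero[OF D] n by simp
  next
    case (Suc j')
    have "last_nonzero w (Ncount k us (Suc j')) = w (Ncount k us j')"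
      by (rule last_nonzero_block[of w "Ncount k us j'",
            OF decomp_nonzero[OF D] _ decomp_block[OF D]])
        (simp add: strict_mono_less[OF strict_mono_Ncount])
    then show ?thesis using decompD(2,4)[OF D, of j'] decompD(4)[OF D, of j] Suc n by simp
  qed
  then show "n \<in> switches w" using decomp_nonzero[OF D] n by (simp add: switches_def)
qed

lemma Ncount_eq_enumerate_switches:
  assumes "decomp p w k a us"
  shows "Ncount k us = enumerate (switches w)"
proof -
  have "Ncount k us = enumerate (range (Ncount k us))"
    using enumerate_range_strict_mono[OF strict_mono_Ncount] by (rule ext[OF sym])
  then show ?thesis using switches_eq_range_Ncount[OF assms] by simp
qed

lemma infinite_switches_if_decomp:
  assumes "decomp p w k a us"
  shows "infinite (switches w)"
proof -
  have "infinite (range (Ncount k us))"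
    by (rule range_inj_infinite, rule strict_mono_imp_inj_on, rule strict_mono_Ncount)
  then show ?thesis by (simp add: switches_eq_range_Ncount[OF assms])
qed

lemma decomp_if_infinite_switches:
  assumes W: "w \<in> words p" and S: "infinite (switches w)"
  defines "e \<equiv> enumerate (switches w)"
  shows "decomp p w (e 0) (\<lambda>j. w (e (j - 1))) (\<lambda>j. map w [Suc (e (j - 1)) ..< e j])"
    (is "decomp p w _ ?a ?us")
proof -
  have e_in: "e j \<in> switches w" for j
    using enumerate_in_set[OF S] by (simp add: e_def)
  have e_less: "e i < e j \<longleftrightarrow> i < j" for i j
    using S by (simp add: e_def)
  have Ncount_e: "Ncount (e 0) ?us j = e j" for j
  proof (induction j)
    case (Suc j)
    then show ?case using e_less[of j "Suc j"] by (simp add: Ncount_Suc)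
  qed simp
  have change: "w (e (Suc j)) \<noteq> w (e j)" for j
  proof -
    have "last_nonzero w (e (Suc j)) = w (e j)"
      using e_in[of j] e_less[of j "Suc j"] block_between_switches[OF S]
      by (intro last_nonzero_block) (auto simp: switches_def e_def)
    then show ?thesis using e_in[of "Suc j"] by (simp add: switches_def)
  qed
  have block: "set (?us (Suc j)) \<subseteq> {0, ?a (Suc j)}" for j
  proof
    fix x assume "x \<in> set (?us (Suc j))"
    then obtain i where "x = w i" "e j \<le> i" "i < e (Suc j)" by auto
    then show "x \<in> {0, ?a (Suc j)}" using block_between_switches[OF S, of j i] by (simp add: e_def)
  qed
  have letter: "?a (Suc j) \<in> {1..p}" for j
    using e_in[of j] W by (auto simp: switches_def words_def)
  show ?thesis
    by (rule decompI)
      (use zero_before_switches[OF S] change block letter Ncount_e in \<open>simp_all add: e_def\<close>)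
qed

lemma Lseq_eq_enumerate_switches:
  assumes "w \<in> words p" "infinite (switches w)"
  shows "Lseq p w n = 2 ^ enumerate (switches w) (Suc n)"
proof -
  let ?P = "\<lambda>(k, a, us). decomp p w k a us"
  obtain k a us where eq: "(SOME x. ?P x) = (k, a, us)" by (cases "SOME x. ?P x") auto
  have "\<exists>x. ?P x" using decomp_if_infinite_switches[OF assms] by blast
  then have "?P (SOME x. ?P x)" by (rule someI_ex)
  then have "decomp p w k a us" by (simp add: eq)
  then show ?thesis by (simp add: Lseq_def eq Ncount_eq_enumerate_switches)
qed

text \<open>Without a decomposition, Lseq is a choice from an empty predicate: one and the same junk
  sequence for all such words.\<close>

lemma Lseq_eq_if_finite_switches:
  assumes "finite (switches x)" "finite (switches y)"
  shows "Lseq p x = Lseq p y"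
proof -
  have "(\<lambda>(k, a, us). decomp p x k a us) = (\<lambda>(k, a, us). decomp p y k a us)"
    using assms infinite_switches_if_decomp by (auto simp: fun_eq_iff)
  then show ?thesis by (simp add: Lseq_def)
qed

lemma compatible_Lseq_if_switches_eventually_eq:
  assumes x: "x \<in> words p" and y: "y \<in> words p"
    and ev: "\<forall>\<^sub>F n in sequentially. n \<in> switches x \<longleftrightarrow> n \<in> switches y"
  shows "compatible (Lseq p x) (Lseq p y)"
proof (cases "finite (switches x)")
  case True
  then have "Lseq p x = Lseq p y"
    using finite_iff_if_eventually_eq[OF ev] Lseq_eq_if_finite_switches by blast
  then show ?thesis unfolding compatible_def by (metis add_0)
next
  case False
  then have "infinite (switches y)" using finite_iff_if_eventually_eq[OF ev] by simp
  then obtain l h where lh: "\<And>n. enumerate (switches x) (l + n) = enumerate (switches y) (h + n)"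
    using enumerate_shift_if_eventually_eq[OF False _ ev] by blast
  have "Lseq p x (l + n) = Lseq p y (h + n)" for n
    using lh[of "Suc n"] Lseq_eq_enumerate_switches[OF x False]
      Lseq_eq_enumerate_switches[OF y \<open>infinite (switches y)\<close>] by simp
  then show ?thesis unfolding compatible_def by blast
qed

lemma last_nonzero_eq_if_eventually_eq:
  assumes "\<And>n. c \<le> n \<Longrightarrow> x n = y n" "c \<le> m" "x m \<noteq> 0" "m < n"
  shows "last_nonzero x n = last_nonzero y n"
  using assms(4)
proof (induction n)
  case (Suc n)
  then show ?case using assms(1)[of n] assms(1)[of m] assms(2,3) by (cases "n = m") auto
qed simp

lemma switches_eventually_eq_if_eventually_eq:
  assumes "\<forall>\<^sub>F n in sequentially. x n = y n"
  shows "\<forall>\<^sub>F n in sequentially. n \<in> switches x \<longleftrightarrow> n \<in> switches y"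
proof -
  obtain c where c: "\<And>n. c \<le> n \<Longrightarrow> x n = y n" using assms by (auto simp: eventually_sequentially)
  show ?thesis
  proof (cases "\<exists>m\<ge>c. x m \<noteq> 0")
    case True
    then obtain m where m: "c \<le> m" "x m \<noteq> 0" by blast
    have "n \<in> switches x \<longleftrightarrow> n \<in> switches y" if "Suc m \<le> n" for n
      using last_nonzero_eq_if_eventually_eq[of c x y, OF c m, of n] c[of n] m(1) that
      by (simp add: switches_def)
    then show ?thesis unfolding eventually_sequentially by blast
  next
    case False
    then have "n \<notin> switches x \<and> n \<notin> switches y" if "c \<le> n" for n
      using c[of n] that by (simp add: switches_def)
    then show ?thesis unfolding eventually_sequentially by blast
  qed
qed

lemma switches_gen_eventually_eq:
  "\<forall>\<^sub>F n in sequentially. n \<in> switches (gen i x) \<longleftrightarrow> n \<in> switches x"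
proof (cases "\<exists>m. x m \<noteq> 0")
  case True
  then obtain m where "x m \<noteq> 0" by blast
  then have "\<forall>\<^sub>F n in sequentially. gen i x n = x n"
    unfolding eventually_sequentially gen_def by (intro exI[of _ "Suc m"]) auto
  then show ?thesis by (rule switches_eventually_eq_if_eventually_eq)
next
  case False
  then have "gen i x = (\<lambda>_. i)" "x = (\<lambda>_. 0)" by (auto simp: gen_def fun_eq_iff)
  moreover have "n \<notin> switches (\<lambda>_. i)" if "1 \<le> n" for n
    using that by (cases n) (auto simp: switches_def)
  ultimately show ?thesis unfolding eventually_sequentially by (auto simp: switches_def)
qed

theorem lemma4p18:
  fixes p :: nat and u v :: "nat \<Rightarrow> nat"
  assumes "p \<ge> 1" and "u \<in> E1 p" and "v \<in> E1 p" and "v \<in> orbit p u"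
  shows "compatible (Lseq p u) (Lseq p v)"
proof -
  have "(u, v) \<in> {(x, y). schreier_adj p x y}\<^sup>*" using assms(4) by (simp add: orbit_def)
  then have "\<forall>\<^sub>F n in sequentially. n \<in> switches u \<longleftrightarrow> n \<in> switches v"
  proof (induction rule: rtrancl_induct)
    case (step y z)
    then obtain i where "z = gen i y \<or> y = gen i z" by (auto simp: schreier_adj_def)
    then have "\<forall>\<^sub>F n in sequentially. n \<in> switches y \<longleftrightarrow> n \<in> switches z"
      using switches_gen_eventually_eq[of i y] switches_gen_eventually_eq[of i z]
      by (auto elim: eventually_mono)
    with step.IH show ?case by (auto elim: eventually_elim2)
  qed simp
  moreover have "u \<in> words p" "v \<in> words p" using assms(2,3) by (simp_all add: E1_def)
  ultimately show ?thesis using compatible_Lseq_if_switches_eventually_eq by blast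
qed

end
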